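(* For all integers $n\ge 3$ and all integers $d$, $$b_n^d=v_{n-1}^{d-2},\qquad w_n^d=v_{n-1}^d+w_{n-1}^{d-1}+v_{n-2}^{d-2},\qquad v_n^d=v_{n-1}^d+w_{n-1}^{d-1}+v_{n-1}^{d-2}+v_{n-2}^{d-2}.$$
   Context: The $2\times n$ Miura-ori $M_{2,n}$ ($n\ge1$) has faces $\alpha_{i,j}$ ($i\in\{1,2\}$, $j\in\{1,\dots,n\}$), interior vertices $x_1,\dots,x_{n-1}$, and creases $e_0$ and $e_{3k-1},e_{3k},e_{3k+1}$ ($k=1,\dots,n-1$). At $x_k$ the creases are left $e_{3k-3}$, top $e_{3k-1}$, right $e_{3k}$, bottom $e_{3k+1}$. Face $\alpha_{1,j}$ is bordered by those of $e_{3j-4}$ (iff $j\ge2$), $e_{3j-3}$, $e_{3j-1}$ (iff $j\le n-1$); $\alpha_{2,j}$ by those of $e_{3j-2}$ (iff $j\ge2$), $e_{3j-3}$, $e_{3j+1}$ (iff $j\le n-1$). An MV assignment $\mu$ maps creases to $\{1,-1\}$; it is locally valid if for each $k$ exactly one of $\mu(e_{3k-1}),\mu(e_{3k}),\mu(e_{3k+1})$ differs from $\mu(e_{3k-3})$. The face flip $\mu_\alpha$ negates $\mu$ on the creases bordering $\alpha$; $\alpha$ is flippable under $\mu$ if $\mu,\mu_\alpha$ are both locally valid; $f(\mu)$ is the number of flippable faces. For $n\ge 2$, the restriction of a locally valid $\mu'$ on $M_{2,n}$ to the creases of $M_{2,n-1}$ (all but $e_{3n-4},e_{3n-3},e_{3n-2}$)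 is a locally valid $\mu$ on $M_{2,n-1}$; $\mu'$ is blue if $f(\mu')-f(\mu)=2$ and non-blue otherwise. Both locally valid assignments of $M_{2,1}$ are blue. Let $v_n^d$ be the number of locally valid MV assignments of $M_{2,n}$ with exactly $d$ flippable faces, $b_n^d$ the number of these that are blue, and $w_n^d=v_n^d-b_n^d$ the number that are non-blue (all these are $0$ when no such assignment exists). *)

theory Defs
  imports Main
begin

text \<open>The 2 x n Miura-ori M_{2,n}. Crease e_i is represented by the natural number i.
  Creases: e_0 and e_{3k-1}, e_{3k}, e_{3k+1} for k = 1..n-1.\<close>

definition creases :: "nat \<Rightarrow> nat set" where
  "creases n = {0} \<union> (\<Union>k\<in>{1..n-1}. {3*k-1, 3*k, 3*k+1})"

definition faces :: "nat \<Rightarrow> (nat \<times> nat) set" where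
  "faces n = {1,2} \<times> {1..n}"

definition border :: "nat \<Rightarrow> nat \<times> nat \<Rightarrow> nat set" where
  "border n a = (let i = fst a; j = snd a in
     if i = 1 then (if j \<ge> 2 then {3*j-4} else {}) \<union> {3*j-3} \<union> (if j \<le> n-1 then {3*j-1} else {})
     else (if j \<ge> 2 then {3*j-2} else {}) \<union> {3*j-3} \<union> (if j \<le> n-1 then {3*j+1} else {}))"

text \<open>MV assignments: maps from the creases of M_{2,n} to {1,-1}; represented as
  functions nat => int which are 0 outside the crease set (extensional).\<close>
definition mv_assignments :: "nat \<Rightarrow> (nat \<Rightarrow> int) set" where
  "mv_assignments n = {\<mu>. (\<forall>e\<in>creases n. \<mu> e \<in> {1,-1}) \<and> (\<forall>e. e \<notin> creases n \<longrightarrow> \<mu> e = 0)}"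

text \<open>Local validity at vertex x_k: exactly one of top/right/bottom differs from left.\<close>
definition locally_valid :: "nat \<Rightarrow> (nat \<Rightarrow> int) \<Rightarrow> bool" where
  "locally_valid n \<mu> \<longleftrightarrow> \<mu> \<in> mv_assignments n \<and>
     (\<forall>k\<in>{1..n-1}. card {e\<in>{3*k-1, 3*k, 3*k+1}. \<mu> e \<noteq> \<mu> (3*k-3)} = 1)"

definition face_flip :: "nat \<Rightarrow> nat \<times> nat \<Rightarrow> (nat \<Rightarrow> int) \<Rightarrow> (nat \<Rightarrow> int)" where
  "face_flip n a \<mu> = (\<lambda>e. if e \<in> border n a then - \<mu> e else \<mu> e)"

definition flippable :: "nat \<Rightarrow> (nat \<Rightarrow> int) \<Rightarrow> nat \<times> nat \<Rightarrow> bool" where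
  "flippable n \<mu> a \<longleftrightarrow> locally_valid n \<mu> \<and> locally_valid n (face_flip n a \<mu>)"

definition nflip :: "nat \<Rightarrow> (nat \<Rightarrow> int) \<Rightarrow> nat" where
  "nflip n \<mu> = card {a\<in>faces n. flippable n \<mu> a}"

definition restrict_mv :: "nat \<Rightarrow> (nat \<Rightarrow> int) \<Rightarrow> (nat \<Rightarrow> int)" where
  "restrict_mv n \<mu> = (\<lambda>e. if e \<in> creases (n-1) then \<mu> e else 0)"

definition blue :: "nat \<Rightarrow> (nat \<Rightarrow> int) \<Rightarrow> bool" where
  "blue n \<mu> \<longleftrightarrow> (if n = 1 then True
     else int (nflip n \<mu>) - int (nflip (n-1) (restrict_mv n \<mu>)) = 2)"

definition vcount :: "nat \<Rightarrow> int \<Rightarrow> int" where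
  "vcount n d = int (card {\<mu>. locally_valid n \<mu> \<and> int (nflip n \<mu>) = d})"

definition bcount :: "nat \<Rightarrow> int \<Rightarrow> int" where
  "bcount n d = int (card {\<mu>. locally_valid n \<mu> \<and> int (nflip n \<mu>) = d \<and> blue n \<mu>})"

definition wcount :: "nat \<Rightarrow> int \<Rightarrow> int" where
  "wcount n d = vcount n d - bcount n d"

end

theory Submission
  imports Defs
begin

(* A locally valid assignment of M_{2,n+1} is a locally valid assignment of M_{2,n} together
   with the choice of its odd crease at the new vertex x_n: the one of top, right, bottom that
   differs from the left crease e_{3n-3}.  Whether face (i, j) is flippable depends only on the
   odd creases at x_{j-1} and x_j, so appending x_n raises f by 2 if its odd crease is the right
   one (these are exactly the blue assignments), and otherwise by 1 or 0 according to whether the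
   odd crease at x_{n-1} is the opposite vertical crease.  Counting assignments according to
   their last odd crease therefore obeys a linear recursion, and the three identities follow. *)

lemma finite_creases: "finite (creases n)"
  unfolding creases_def by auto

lemma finite_mv_assignments: "finite (mv_assignments n)"
proof -
  have "mv_assignments n \<subseteq> {\<mu>. \<forall>e. (e \<in> creases n \<longrightarrow> \<mu> e \<in> {1, -1}) \<and> (e \<notin> creases n \<longrightarrow> \<mu> e = 0)}"
    unfolding mv_assignments_def by auto
  moreover have "finite \<dots>"
    by (rule finite_set_of_finite_funs) (auto simp: finite_creases)
  ultimately show ?thesis
    by (rule finite_subset)
qed

lemma finite_locally_valid: "finite {\<mu>. locally_valid n \<mu> \<and> P \<mu>}"
  by (rule finite_subset[OF _ finite_mv_assignments[of n]]) (auto simp: locally_valid_def)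

lemma mv_assignments_crease:
  "\<mu> \<in> mv_assignments n \<Longrightarrow> e \<in> creases n \<Longrightarrow> \<mu> e = 1 \<or> \<mu> e = -1"
  unfolding mv_assignments_def by auto

lemma mv_assignments_not_crease:
  "\<mu> \<in> mv_assignments n \<Longrightarrow> e \<notin> creases n \<Longrightarrow> \<mu> e = 0"
  unfolding mv_assignments_def by auto

lemma left_crease_mem: "1 \<le> k \<Longrightarrow> k \<le> n \<Longrightarrow> 3*k-3 \<in> creases n"
proof (cases "k = 1")
  case False
  assume "1 \<le> k" "k \<le> n"
  with False have "k-1 \<in> {1..n-1}" "3*k-3 = 3*(k-1)" by auto
  then show ?thesis unfolding creases_def by blast
qed (simp add: creases_def)

lemma vertex_creases_mem:
  "k \<in> {1..n-1} \<Longrightarrow> 3*k-3 \<in> creases n \<and> 3*k-1 \<in> creases n \<and> 3*k \<in> creases n \<and> 3*k+1 \<in> creases n"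
  using left_crease_mem[of k n] unfolding creases_def by auto

lemma creases_Suc: "1 \<le> n \<Longrightarrow> creases (Suc n) = creases n \<union> {3*n-1, 3*n, 3*n+1}"
proof -
  assume "1 \<le> n"
  then have "{1..Suc n - 1} = insert n {1..n-1}" by auto
  then show ?thesis unfolding creases_def by auto
qed

lemma creases_less: "1 \<le> n \<Longrightarrow> e \<in> creases n \<Longrightarrow> e < 3*n-1"
  unfolding creases_def by auto

lemma card_filter_three_eq_1:
  assumes "a \<noteq> b" "a \<noteq> c" "b \<noteq> c"
  shows "card {e\<in>{a, b, c}. P e} = 1 \<longleftrightarrow>
    (P a \<and> \<not> P b \<and> \<not> P c) \<or> (\<not> P a \<and> P b \<and> \<not> P c) \<or> (\<not> P a \<and> \<not> P b \<and> P c)"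
proof -
  have filter: "{e\<in>{a, b, c}. P e} =
      (if P a then {a} else {}) \<union> (if P b then {b} else {}) \<union> (if P c then {c} else {})"
    by auto
  show ?thesis
    unfolding filter using assms
    by (cases "P a"; cases "P b"; cases "P c") (auto simp: card_insert_if)
qed

definition valid_vertex :: "int \<Rightarrow> int \<Rightarrow> int \<Rightarrow> int \<Rightarrow> bool" where
  "valid_vertex l t r b \<longleftrightarrow>
     (t \<noteq> l \<and> r = l \<and> b = l) \<or> (t = l \<and> r \<noteq> l \<and> b = l) \<or> (t = l \<and> r = l \<and> b \<noteq> l)"

lemma locally_valid_iff:
  "locally_valid n \<mu> \<longleftrightarrow> \<mu> \<in> mv_assignments n \<and>
     (\<forall>k\<in>{1..n-1}. valid_vertex (\<mu> (3*k-3)) (\<mu> (3*k-1)) (\<mu> (3*k)) (\<mu> (3*k+1)))"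
proof -
  have "card {e\<in>{3*k-1, 3*k, 3*k+1}. \<mu> e \<noteq> \<mu> (3*k-3)} = 1 \<longleftrightarrow>
      valid_vertex (\<mu> (3*k-3)) (\<mu> (3*k-1)) (\<mu> (3*k)) (\<mu> (3*k+1))" if "1 \<le> k" for k
    using that by (subst card_filter_three_eq_1) (auto simp: valid_vertex_def)
  then show ?thesis
    unfolding locally_valid_def by auto
qed

(* 0, 1, 2 stand for the top, right and bottom crease of x_k. *)
definition odd_crease :: "(nat \<Rightarrow> int) \<Rightarrow> nat \<Rightarrow> nat" where
  "odd_crease \<mu> k =
     (if \<mu> (3*k-1) \<noteq> \<mu> (3*k-3) then 0 else if \<mu> (3*k) \<noteq> \<mu> (3*k-3) then 1 else 2)"

lemma odd_crease_less_3: "odd_crease \<mu> k < 3"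
  unfolding odd_crease_def by auto

lemma odd_crease_eq_0_iff: "odd_crease \<mu> k = 0 \<longleftrightarrow> \<mu> (3*k-1) \<noteq> \<mu> (3*k-3)"
  unfolding odd_crease_def by auto

lemma odd_crease_eq_2_iff:
  "valid_vertex (\<mu> (3*k-3)) (\<mu> (3*k-1)) (\<mu> (3*k)) (\<mu> (3*k+1)) \<Longrightarrow>
    odd_crease \<mu> k = 2 \<longleftrightarrow> \<mu> (3*k+1) \<noteq> \<mu> (3*k-3)"
  unfolding odd_crease_def valid_vertex_def by auto

lemma valid_vertex_values:
  assumes "valid_vertex (\<mu> (3*k-3)) (\<mu> (3*k-1)) (\<mu> (3*k)) (\<mu> (3*k+1))"
    and "{\<mu> (3*k-3), \<mu> (3*k-1), \<mu> (3*k), \<mu> (3*k+1)} \<subseteq> {1, -1}"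
  shows "\<mu> (3*k-1) = (if odd_crease \<mu> k = 0 then - \<mu> (3*k-3) else \<mu> (3*k-3))"
    and "\<mu> (3*k) = (if odd_crease \<mu> k = 1 then - \<mu> (3*k-3) else \<mu> (3*k-3))"
    and "\<mu> (3*k+1) = (if odd_crease \<mu> k = 2 then - \<mu> (3*k-3) else \<mu> (3*k-3))"
  using assms unfolding odd_crease_def valid_vertex_def by auto

lemma valid_vertex_flip:
  assumes "l \<in> {1, -1}" "t \<in> {1, -1}" "r \<in> {1, -1}" "b \<in> {1, -1}" "valid_vertex l t r b"
    and "i \<in> {1, 2 :: nat}"
  shows "valid_vertex (if j = k then -l else l) (if i = 1 \<and> (j = k \<or> j = k+1) then -t else t)
      (if j = k+1 then -r else r) (if i = 2 \<and> (j = k \<or> j = k+1) then -b else b) \<longleftrightarrow>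
    (j = k \<longrightarrow> (if i = 1 then t else b) = l) \<and> (j = (k::nat)+1 \<longrightarrow> (if i = 1 then b else t) = l)"
  using assms unfolding valid_vertex_def by auto

(* Face (i, j) lies between x_{j-1} and x_j.  Flipping it keeps x_j valid iff the odd crease
   there is not the vertical crease of row i, and keeps x_{j-1} valid iff its odd crease is not
   the vertical crease of the other row. *)
definition face_ok :: "nat \<Rightarrow> (nat \<Rightarrow> nat) \<Rightarrow> nat \<Rightarrow> nat \<Rightarrow> bool" where
  "face_ok n w i j \<longleftrightarrow>
     (j = 1 \<or> w (j-1) \<noteq> (if i = 1 then 2 else 0)) \<and> (j = n \<or> w j \<noteq> (if i = 1 then 0 else 2))"

lemma border_vertex:
  assumes "i \<in> {1, 2}" "1 \<le> j" "k \<in> {1..n-1}"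
  shows "3*k-3 \<in> border n (i, j) \<longleftrightarrow> j = k"
    and "3*k-1 \<in> border n (i, j) \<longleftrightarrow> i = 1 \<and> (j = k \<or> j = k+1)"
    and "3*k \<in> border n (i, j) \<longleftrightarrow> j = k+1"
    and "3*k+1 \<in> border n (i, j) \<longleftrightarrow> i = 2 \<and> (j = k \<or> j = k+1)"
  using assms unfolding border_def Let_def by (auto; presburger)+

lemma face_flip_mv_assignments:
  "\<mu> \<in> mv_assignments n \<Longrightarrow> face_flip n a \<mu> \<in> mv_assignments n"
  unfolding mv_assignments_def face_flip_def by auto

lemma valid_vertex_face_flip:
  assumes "locally_valid n \<mu>" "i \<in> {1, 2}" "1 \<le> j" "k \<in> {1..n-1}"
  defines "\<mu>' \<equiv> face_flip n (i, j) \<mu>"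
  shows "valid_vertex (\<mu>' (3*k-3)) (\<mu>' (3*k-1)) (\<mu>' (3*k)) (\<mu>' (3*k+1)) \<longleftrightarrow>
    (j = k+1 \<longrightarrow> odd_crease \<mu> k \<noteq> (if i = 1 then 2 else 0)) \<and>
    (j = k \<longrightarrow> odd_crease \<mu> k \<noteq> (if i = 1 then 0 else 2))"
proof -
  have valid: "valid_vertex (\<mu> (3*k-3)) (\<mu> (3*k-1)) (\<mu> (3*k)) (\<mu> (3*k+1))"
    using assms(1,4) by (auto simp: locally_valid_iff)
  have "\<mu> \<in> mv_assignments n"
    using assms(1) by (simp add: locally_valid_iff)
  then have vals: "\<mu> (3*k-3) \<in> {1, -1}" "\<mu> (3*k-1) \<in> {1, -1}" "\<mu> (3*k) \<in> {1, -1}"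
      "\<mu> (3*k+1) \<in> {1, -1}"
    using vertex_creases_mem[OF assms(4)] mv_assignments_crease by auto
  have "valid_vertex (\<mu>' (3*k-3)) (\<mu>' (3*k-1)) (\<mu>' (3*k)) (\<mu>' (3*k+1)) \<longleftrightarrow>
    (j = k \<longrightarrow> (if i = 1 then \<mu> (3*k-1) else \<mu> (3*k+1)) = \<mu> (3*k-3)) \<and>
    (j = k+1 \<longrightarrow> (if i = 1 then \<mu> (3*k+1) else \<mu> (3*k-1)) = \<mu> (3*k-3))"
    unfolding \<mu>'_def face_flip_def border_vertex[OF assms(2-4)]
    by (rule valid_vertex_flip[OF vals valid assms(2)])
  also have "\<dots> \<longleftrightarrow> (j = k+1 \<longrightarrow> odd_crease \<mu> k \<noteq> (if i = 1 then 2 else 0)) \<and>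
      (j = k \<longrightarrow> odd_crease \<mu> k \<noteq> (if i = 1 then 0 else 2))"
    using odd_crease_eq_0_iff[of \<mu> k] odd_crease_eq_2_iff[OF valid] by auto
  finally show ?thesis .
qed

lemma flippable_iff_face_ok:
  assumes "locally_valid n \<mu>" "i \<in> {1, 2}" "j \<in> {1..n}"
  shows "flippable n \<mu> (i, j) \<longleftrightarrow> face_ok n (odd_crease \<mu>) i j"
proof -
  let ?\<mu>' = "face_flip n (i, j) \<mu>"
  have "flippable n \<mu> (i, j) \<longleftrightarrow>
      (\<forall>k\<in>{1..n-1}. valid_vertex (?\<mu>' (3*k-3)) (?\<mu>' (3*k-1)) (?\<mu>' (3*k)) (?\<mu>' (3*k+1)))"
    using assms(1) face_flip_mv_assignments unfolding flippable_def locally_valid_iff by blast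
  also have "\<dots> \<longleftrightarrow> (\<forall>k\<in>{1..n-1}. (j = k+1 \<longrightarrow> odd_crease \<mu> k \<noteq> (if i = 1 then 2 else 0)) \<and>
      (j = k \<longrightarrow> odd_crease \<mu> k \<noteq> (if i = 1 then 0 else 2)))"
    using valid_vertex_face_flip[OF assms(1,2)] assms(3) by simp
  also have "\<dots> \<longleftrightarrow> face_ok n (odd_crease \<mu>) i j"
  proof
    assume H: "\<forall>k\<in>{1..n-1}. (j = k+1 \<longrightarrow> odd_crease \<mu> k \<noteq> (if i = 1 then 2 else 0)) \<and>
      (j = k \<longrightarrow> odd_crease \<mu> k \<noteq> (if i = 1 then 0 else 2))"
    have "odd_crease \<mu> (j-1) \<noteq> (if i = 1 then 2 else 0)" if "j \<noteq> 1"
    proof -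
      from that assms(3) have "j-1 \<in> {1..n-1}" "j = (j-1)+1" by auto
      with H show ?thesis by blast
    qed
    moreover have "odd_crease \<mu> j \<noteq> (if i = 1 then 0 else 2)" if "j \<noteq> n"
    proof -
      from that assms(3) have "j \<in> {1..n-1}" by auto
      with H show ?thesis by blast
    qed
    ultimately show "face_ok n (odd_crease \<mu>) i j"
      unfolding face_ok_def by blast
  qed (use assms(3) in \<open>auto simp: face_ok_def\<close>)
  finally show ?thesis .
qed

definition flip_count :: "nat \<Rightarrow> (nat \<Rightarrow> nat) \<Rightarrow> nat" where
  "flip_count n w = (\<Sum>j=1..n. of_bool (face_ok n w 1 j) + of_bool (face_ok n w 2 j))"

lemma nflip_eq_flip_count:
  assumes "locally_valid n \<mu>"
  shows "nflip n \<mu> = flip_count n (odd_crease \<mu>)"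
proof -
  let ?ok = "\<lambda>(i, j). face_ok n (odd_crease \<mu>) i j"
  have "nflip n \<mu> = card (faces n \<inter> {a. ?ok a})"
    unfolding nflip_def faces_def using flippable_iff_face_ok[OF assms]
    by (intro arg_cong[where f = card]) auto
  also have "\<dots> = (\<Sum>a\<in>faces n. of_bool (?ok a))"
    by (simp add: faces_def)
  also have "\<dots> = (\<Sum>(i, j)\<in>faces n. of_bool (face_ok n (odd_crease \<mu>) i j))"
    by (simp add: prod.case_distrib)
  also have "\<dots> = flip_count n (odd_crease \<mu>)"
    unfolding faces_def flip_count_def sum.cartesian_product[symmetric]
    by (simp add: sum.distrib del: sum_of_bool_eq)
  finally show ?thesis .
qed

lemma flip_count_Suc:
  assumes "1 \<le> n" "\<forall>k<n. w' k = w k" "w' n = x" "x < 3"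
  shows "flip_count (Suc n) w' =
    flip_count n w + (if x = 1 then 2 else of_bool (2 \<le> n \<and> w (n-1) = 2 - x))"
proof -
  obtain m where n: "n = Suc m"
    using assms(1) by (cases n) auto
  define F where "F p v j = of_bool (face_ok p v 1 j) + (of_bool (face_ok p v 2 j) :: nat)"
    for p v j
  have flip_count: "flip_count p v = (\<Sum>j=1..p. F p v j)" for p v
    unfolding flip_count_def F_def ..
  have inner: "(\<Sum>j=1..m. F (Suc n) w' j) = (\<Sum>j=1..m. F n w j)"
    using assms(2) n by (intro sum.cong) (auto simp: F_def face_ok_def)
  have "x = 0 \<or> x = 1 \<or> x = 2"
    using assms(4) by auto
  then have last: "F (Suc n) w' n + F (Suc n) w' (Suc n) =
      F n w n + (if x = 1 then 2 else of_bool (2 \<le> n \<and> w (n-1) = 2 - x))"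
    using assms(2,3) n by (auto simp: F_def face_ok_def)
  show ?thesis
    unfolding flip_count n sum.cl_ivl_Suc using inner last by (simp add: n)
qed

definition extend :: "nat \<Rightarrow> (nat \<Rightarrow> int) \<Rightarrow> nat \<Rightarrow> nat \<Rightarrow> int" where
  "extend n \<mu> x = (\<lambda>e. if e \<in> {3*n-1, 3*n, 3*n+1}
     then (if e = 3*n-1+x then - \<mu> (3*n-3) else \<mu> (3*n-3)) else \<mu> e)"

lemma extend_below: "e < 3*n-1 \<Longrightarrow> extend n \<mu> x e = \<mu> e"
  unfolding extend_def by auto

lemma extend_vertex:
  assumes "1 \<le> n"
  shows "extend n \<mu> x (3*n-3) = \<mu> (3*n-3)"
    and "extend n \<mu> x (3*n-1) = (if x = 0 then - \<mu> (3*n-3) else \<mu> (3*n-3))"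
    and "extend n \<mu> x (3*n) = (if x = 1 then - \<mu> (3*n-3) else \<mu> (3*n-3))"
    and "extend n \<mu> x (3*n+1) = (if x = 2 then - \<mu> (3*n-3) else \<mu> (3*n-3))"
  using assms unfolding extend_def by auto

lemma odd_crease_extend:
  assumes "1 \<le> n" "\<mu> \<in> mv_assignments n" "x < 3"
  shows "odd_crease (extend n \<mu> x) n = x"
    and "k < n \<Longrightarrow> odd_crease (extend n \<mu> x) k = odd_crease \<mu> k"
proof -
  have "\<mu> (3*n-3) \<noteq> 0"
    using mv_assignments_crease[OF assms(2) left_crease_mem[OF assms(1) order_refl]] by auto
  then show "odd_crease (extend n \<mu> x) n = x"
    using assms(3) unfolding odd_crease_def extend_vertex[OF assms(1)] by auto
  show "k < n \<Longrightarrow> odd_crease (extend n \<mu> x) k = odd_crease \<mu> k"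
    by (simp add: odd_crease_def extend_below)
qed

lemma extend_locally_valid:
  assumes "1 \<le> n" "locally_valid n \<mu>" "x < 3"
  shows "locally_valid (Suc n) (extend n \<mu> x)"
proof -
  have mv: "\<mu> \<in> mv_assignments n"
    and valid: "\<forall>k\<in>{1..n-1}. valid_vertex (\<mu> (3*k-3)) (\<mu> (3*k-1)) (\<mu> (3*k)) (\<mu> (3*k+1))"
    using assms(2) by (auto simp: locally_valid_iff)
  have left: "\<mu> (3*n-3) = 1 \<or> \<mu> (3*n-3) = -1"
    using mv_assignments_crease[OF mv left_crease_mem[OF assms(1) order_refl]] .
  have "extend n \<mu> x e \<in> {1, -1}" if "e \<in> creases (Suc n)" for e
  proof (cases "e \<in> creases n")
    case True
    with mv creases_less[OF assms(1)] show ?thesis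
      by (simp add: extend_below mv_assignments_def)
  next
    case False
    with that have "e \<in> {3*n-1, 3*n, 3*n+1}"
      by (simp add: creases_Suc[OF assms(1)])
    with left show ?thesis
      by (auto simp: extend_def)
  qed
  moreover have "extend n \<mu> x e = 0" if "e \<notin> creases (Suc n)" for e
    using that mv by (simp add: creases_Suc[OF assms(1)] extend_def mv_assignments_not_crease)
  ultimately have "extend n \<mu> x \<in> mv_assignments (Suc n)"
    unfolding mv_assignments_def by blast
  moreover have "valid_vertex (extend n \<mu> x (3*k-3)) (extend n \<mu> x (3*k-1))
      (extend n \<mu> x (3*k)) (extend n \<mu> x (3*k+1))" if "k \<in> {1..n}" for k
  proof (cases "k = n")
    case True
    with left assms(3) show ?thesis
      unfolding True extend_vertex[OF assms(1)] valid_vertex_def by auto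
  next
    case False
    with that have "k \<in> {1..n-1}" "3*k+1 < 3*n-1"
      by auto
    with valid show ?thesis
      by (simp add: extend_below)
  qed
  ultimately show ?thesis
    unfolding locally_valid_iff by simp
qed

lemma restrict_extend:
  assumes "1 \<le> n" "\<mu> \<in> mv_assignments n"
  shows "restrict_mv (Suc n) (extend n \<mu> x) = \<mu>"
  using assms creases_less[OF assms(1)] mv_assignments_not_crease[OF assms(2)]
  unfolding restrict_mv_def by (auto simp: extend_below)

lemma restrict_locally_valid:
  assumes "1 \<le> n" "locally_valid (Suc n) \<mu>"
  shows "locally_valid n (restrict_mv (Suc n) \<mu>)"
proof -
  have mv: "\<mu> \<in> mv_assignments (Suc n)"
    and valid: "\<forall>k\<in>{1..n}. valid_vertex (\<mu> (3*k-3)) (\<mu> (3*k-1)) (\<mu> (3*k)) (\<mu> (3*k+1))"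
    using assms(2) by (auto simp: locally_valid_iff)
  have "restrict_mv (Suc n) \<mu> \<in> mv_assignments n"
    using mv unfolding mv_assignments_def restrict_mv_def creases_Suc[OF assms(1)] by auto
  moreover have "valid_vertex (restrict_mv (Suc n) \<mu> (3*k-3)) (restrict_mv (Suc n) \<mu> (3*k-1))
      (restrict_mv (Suc n) \<mu> (3*k)) (restrict_mv (Suc n) \<mu> (3*k+1))" if "k \<in> {1..n-1}" for k
  proof -
    have "k \<in> {1..n}"
      using that by auto
    with valid vertex_creases_mem[OF that] show ?thesis
      by (simp add: restrict_mv_def)
  qed
  ultimately show ?thesis
    unfolding locally_valid_iff by simp
qed

lemma extend_restrict:
  assumes "1 \<le> n" "locally_valid (Suc n) \<mu>"
  shows "extend n (restrict_mv (Suc n) \<mu>) (odd_crease \<mu> n) = \<mu>"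
proof
  fix e
  have mv: "\<mu> \<in> mv_assignments (Suc n)"
    and valid: "valid_vertex (\<mu> (3*n-3)) (\<mu> (3*n-1)) (\<mu> (3*n)) (\<mu> (3*n+1))"
    using assms by (auto simp: locally_valid_iff)
  have left: "restrict_mv (Suc n) \<mu> (3*n-3) = \<mu> (3*n-3)"
    using left_crease_mem[OF assms(1) order_refl] by (simp add: restrict_mv_def)
  have "{\<mu> (3*n-3), \<mu> (3*n-1), \<mu> (3*n), \<mu> (3*n+1)} \<subseteq> {1, -1}"
    using mv_assignments_crease[OF mv] vertex_creases_mem[of n "Suc n"] assms(1) by auto
  note vertex = valid_vertex_values[OF valid this]
  show "extend n (restrict_mv (Suc n) \<mu>) (odd_crease \<mu> n) e = \<mu> e"
  proof (cases "e \<in> {3*n-1, 3*n, 3*n+1}")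
    case True
    then consider "e = 3*n-1" | "e = 3*n" | "e = 3*n+1"
      by blast
    then show ?thesis
      by cases (simp_all only: extend_vertex[OF assms(1)] left vertex)
  next
    case False
    then have "e \<notin> creases n \<Longrightarrow> e \<notin> creases (Suc n)"
      by (simp add: creases_Suc[OF assms(1)])
    with False mv_assignments_not_crease[OF mv] show ?thesis
      unfolding extend_def restrict_mv_def by auto
  qed
qed

lemma card_odd_crease_Suc:
  assumes "1 \<le> n" "x < 3"
  shows "card {\<mu>. locally_valid (Suc n) \<mu> \<and> odd_crease \<mu> n = x \<and> P \<mu>} =
    card {\<mu>. locally_valid n \<mu> \<and> P (extend n \<mu> x)}"
proof (rule bij_betw_same_card[of "restrict_mv (Suc n)"],
    rule bij_betw_byWitness[where f' = "\<lambda>\<mu>. extend n \<mu> x"])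
  show "\<forall>\<mu>\<in>{\<mu>. locally_valid (Suc n) \<mu> \<and> odd_crease \<mu> n = x \<and> P \<mu>}.
      extend n (restrict_mv (Suc n) \<mu>) x = \<mu>"
    using extend_restrict[OF assms(1)] by auto
  show "\<forall>\<mu>\<in>{\<mu>. locally_valid n \<mu> \<and> P (extend n \<mu> x)}. restrict_mv (Suc n) (extend n \<mu> x) = \<mu>"
    using restrict_extend[OF assms(1)] by (auto simp: locally_valid_iff)
  show "restrict_mv (Suc n) ` {\<mu>. locally_valid (Suc n) \<mu> \<and> odd_crease \<mu> n = x \<and> P \<mu>}
      \<subseteq> {\<mu>. locally_valid n \<mu> \<and> P (extend n \<mu> x)}"
    using restrict_locally_valid[OF assms(1)] extend_restrict[OF assms(1)] by auto
  show "(\<lambda>\<mu>. extend n \<mu> x) ` {\<mu>. locally_valid n \<mu> \<and> P (extend n \<mu> x)}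
      \<subseteq> {\<mu>. locally_valid (Suc n) \<mu> \<and> odd_crease \<mu> n = x \<and> P \<mu>}"
    using extend_locally_valid[OF assms(1) _ assms(2)] odd_crease_extend(1)[OF assms(1) _ assms(2)]
    by (auto simp: locally_valid_iff)
qed

lemma card_split_odd_crease:
  "card {\<mu>. locally_valid n \<mu> \<and> P \<mu>} =
    (\<Sum>y<3. card {\<mu>. locally_valid n \<mu> \<and> odd_crease \<mu> k = y \<and> P \<mu>})"
proof -
  have split: "{\<mu>. locally_valid n \<mu> \<and> P \<mu>} =
      (\<Union>y<3. {\<mu>. locally_valid n \<mu> \<and> odd_crease \<mu> k = y \<and> P \<mu>})"
    using odd_crease_less_3 by blast
  show ?thesis
    unfolding split by (rule card_UN_disjoint) (auto intro: finite_locally_valid)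
qed

lemma nflip_extend:
  assumes "1 \<le> n" "locally_valid n \<mu>" "x < 3"
  shows "nflip (Suc n) (extend n \<mu> x) =
    nflip n \<mu> + (if x = 1 then 2 else of_bool (2 \<le> n \<and> odd_crease \<mu> (n-1) = 2 - x))"
proof -
  have mv: "\<mu> \<in> mv_assignments n"
    using assms(2) by (simp add: locally_valid_iff)
  show ?thesis
    unfolding nflip_eq_flip_count[OF extend_locally_valid[OF assms]]
      nflip_eq_flip_count[OF assms(2)]
    using assms(1,3) odd_crease_extend[OF assms(1) mv assms(3)] by (intro flip_count_Suc) auto
qed

lemma blue_iff_odd_crease:
  assumes "2 \<le> n" "locally_valid n \<mu>"
  shows "blue n \<mu> \<longleftrightarrow> odd_crease \<mu> (n-1) = 1"
proof -
  obtain m where n: "n = Suc m" and m: "1 \<le> m"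
    using assms(1) by (cases n) auto
  let ?r = "restrict_mv n \<mu>" and ?x = "odd_crease \<mu> m"
  have "nflip n \<mu> = nflip (Suc m) (extend m ?r ?x)"
    unfolding n extend_restrict[OF m assms(2)[unfolded n]] ..
  also have "\<dots> =
      nflip m ?r + (if ?x = 1 then 2 else of_bool (2 \<le> m \<and> odd_crease ?r (m-1) = 2 - ?x))"
    using nflip_extend[OF m restrict_locally_valid[OF m] odd_crease_less_3] assms(2) n by simp
  finally show ?thesis
    unfolding blue_def using n m by auto
qed

definition vcount_last :: "nat \<Rightarrow> nat \<Rightarrow> int \<Rightarrow> int" where
  "vcount_last n y d =
     int (card {\<mu>. locally_valid n \<mu> \<and> odd_crease \<mu> (n-1) = y \<and> int (nflip n \<mu>) = d})"

lemma vcount_eq_sum_last: "vcount n d = (\<Sum>y<3. vcount_last n y d)"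
  unfolding vcount_def vcount_last_def by (subst card_split_odd_crease[where k = "n-1"]) simp

lemma bcount_eq_last:
  assumes "2 \<le> n"
  shows "bcount n d = vcount_last n 1 d"
proof -
  have "{\<mu>. locally_valid n \<mu> \<and> int (nflip n \<mu>) = d \<and> blue n \<mu>} =
      {\<mu>. locally_valid n \<mu> \<and> odd_crease \<mu> (n-1) = 1 \<and> int (nflip n \<mu>) = d}"
    using blue_iff_odd_crease[OF assms] by blast
  then show ?thesis
    unfolding bcount_def vcount_last_def by simp
qed

lemma vcount_last_Suc:
  assumes "1 \<le> n" "x < 3"
  shows "vcount_last (Suc n) x d =
    int (card {\<mu>. locally_valid n \<mu> \<and> int (nflip (Suc n) (extend n \<mu> x)) = d})"
  unfolding vcount_last_def using card_odd_crease_Suc[OF assms] by simp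

lemma vcount_last_Suc_right:
  assumes "1 \<le> n"
  shows "vcount_last (Suc n) 1 d = vcount n (d - 2)"
proof -
  have "vcount_last (Suc n) 1 d =
      int (card {\<mu>. locally_valid n \<mu> \<and> int (nflip (Suc n) (extend n \<mu> 1)) = d})"
    using vcount_last_Suc[OF assms, of 1] by simp
  also have "\<dots> = int (card {\<mu>. locally_valid n \<mu> \<and> int (nflip n \<mu>) = d - 2})"
    using nflip_extend[OF assms, of _ 1] by (intro arg_cong[where f = "\<lambda>A. int (card A)"]) auto
  finally show ?thesis
    unfolding vcount_def .
qed

lemma vcount_last_Suc_vertical:
  assumes "2 \<le> n" "x \<in> {0, 2}"
  shows "vcount_last (Suc n) x d =
    vcount_last n x d + vcount_last n 1 d + vcount_last n (2 - x) (d - 1)"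
proof -
  have n: "1 \<le> n" and x: "x < 3" "x \<noteq> 1"
    using assms by auto
  have gain: "int (nflip (Suc n) (extend n \<mu> x)) =
      int (nflip n \<mu>) + of_bool (odd_crease \<mu> (n-1) = 2 - x)"
    if "locally_valid n \<mu>" for \<mu>
    using nflip_extend[OF n that x(1)] assms(1) x(2) by simp
  have fibre: "{\<mu>. locally_valid n \<mu> \<and> odd_crease \<mu> (n-1) = y \<and>
        int (nflip (Suc n) (extend n \<mu> x)) = d} =
      {\<mu>. locally_valid n \<mu> \<and> odd_crease \<mu> (n-1) = y \<and>
        int (nflip n \<mu>) = d - of_bool (y = 2 - x)}" for y
    using gain by force
  have "vcount_last (Suc n) x d = (\<Sum>y<3. vcount_last n y (d - of_bool (y = 2 - x)))"
    unfolding vcount_last_Suc[OF n x(1)]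
    by (subst card_split_odd_crease[where k = "n-1"]) (simp only: fibre vcount_last_def of_nat_sum)
  also have "\<dots> = vcount_last n x d + vcount_last n 1 d + vcount_last n (2 - x) (d - 1)"
    using assms(2) by (auto simp: eval_nat_numeral)
  finally show ?thesis .
qed

lemma bcount_Suc:
  assumes "1 \<le> n"
  shows "bcount (Suc n) d = vcount n (d - 2)"
  using bcount_eq_last[of "Suc n"] vcount_last_Suc_right[OF assms] assms by simp

lemma vcount_Suc:
  assumes "2 \<le> n"
  shows "vcount (Suc n) d = vcount n d + wcount n (d - 1) + vcount n (d - 2) + bcount n d"
proof -
  let ?v = "vcount_last n"
  have "vcount (Suc n) d = (\<Sum>x<3. vcount_last (Suc n) x d)"
    by (rule vcount_eq_sum_last)
  also have "\<dots> =
      (?v 0 d + ?v 1 d + ?v 2 (d - 1)) + vcount n (d - 2) + (?v 2 d + ?v 1 d + ?v 0 (d - 1))"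
    using vcount_last_Suc_vertical[OF assms, of 0] vcount_last_Suc_vertical[OF assms, of 2]
      vcount_last_Suc_right[of n] assms
    by (simp add: eval_nat_numeral)
  also have "\<dots> = vcount n d + wcount n (d - 1) + vcount n (d - 2) + bcount n d"
    using vcount_eq_sum_last[of n] bcount_eq_last[OF assms]
    by (simp add: wcount_def eval_nat_numeral)
  finally show ?thesis .
qed

theorem proposition4p10:
  fixes n :: nat and d :: int
  assumes "n \<ge> 3"
  shows "bcount n d = vcount (n-1) (d-2)
       \<and> wcount n d = vcount (n-1) d + wcount (n-1) (d-1) + vcount (n-2) (d-2)
       \<and> vcount n d = vcount (n-1) d + wcount (n-1) (d-1) + vcount (n-1) (d-2) + vcount (n-2) (d-2)"
proof -
  have n: "Suc (n-1) = n" "Suc (n-2) = n-1"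
    using assms by arith+
  have "bcount n d = vcount (n-1) (d-2)"
    using bcount_Suc[of "n-1" d] assms n by simp
  moreover have "bcount (n-1) d = vcount (n-2) (d-2)"
    using bcount_Suc[of "n-2" d] assms n by simp
  moreover have
    "vcount n d = vcount (n-1) d + wcount (n-1) (d-1) + vcount (n-1) (d-2) + bcount (n-1) d"
    using vcount_Suc[of "n-1" d] assms n by simp
  ultimately show ?thesis
    unfolding wcount_def by simp
qed

end
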